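(* Let $Q$ be a graph property that has an independence function or a clique function $f:\mathbb{N}\to\mathbb{N}$ such that there is a fixed $a\in\mathbb{N}$ with $f(n)\ge n/a$ for all $n\in\mathbb{N}$. Then the graph polynomial $P_Q$ is weakly distinguishing.
   Context: All graphs are finite and simple. A graph property is a class of graphs closed under isomorphism. For $A\subseteq V(G)$, $G[A]$ is the induced subgraph on $A$. A function $f:\mathbb{N}\to\mathbb{N}$ is an independence function (resp. clique function) for a property $Q$ if every graph $G\in Q$ has an independent set (resp. a clique) of size $f(|V(G)|)$. For a property $Q$, $P_Q(G;X)=\sum_{A\subseteq V(G):\, G[A]\in Q} X^{|A|}$. For a graph polynomial $P$ (an isomorphism-invariant map from graphs to polynomials), $G$ is $P$-unique if every graph $H$ with $P(G)=P(H)$ is isomorphic to $G$. Let $\mathcal{G}(n)$ be the set of isomorphism classes of graphs on $n$ vertices and $U_P(n)$ the set of $P$-unique graphs in $\mathcal{G}(n)$. $P$ is weakly distinguishing if $\lim_{n\to\infty}|U_P(n)|/|\mathcal{G}(n)|=0$. *)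

theory Defs
  imports Complex_Main "HOL-Computational_Algebra.Polynomial"
begin

type_synonym graph = "nat set \<times> nat set set"

definition verts :: "graph \<Rightarrow> nat set" where "verts G = fst G"
definition edges :: "graph \<Rightarrow> nat set set" where "edges G = snd G"

definition wf_graph :: "graph \<Rightarrow> bool" where
  "wf_graph G \<longleftrightarrow> finite (verts G) \<and>
     edges G \<subseteq> {{u, v} | u v. u \<in> verts G \<and> v \<in> verts G \<and> u \<noteq> v}"

definition graph_iso :: "graph \<Rightarrow> graph \<Rightarrow> bool" where
  "graph_iso G H \<longleftrightarrow> (\<exists>h. bij_betw h (verts G) (verts H) \<and>
     (\<forall>u\<in>verts G. \<forall>v\<in>verts G. {u, v} \<in> edges G \<longleftrightarrow> {h u, h v} \<in> edges H))"

definition graph_property :: "(graph \<Rightarrow> bool) \<Rightarrow> bool" where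
  "graph_property Q \<longleftrightarrow> (\<forall>G H. wf_graph G \<and> wf_graph H \<and> graph_iso G H \<longrightarrow> (Q G \<longleftrightarrow> Q H))"

definition induced :: "graph \<Rightarrow> nat set \<Rightarrow> graph" where
  "induced G A = (A, {e \<in> edges G. e \<subseteq> A})"

definition independent_set :: "graph \<Rightarrow> nat set \<Rightarrow> bool" where
  "independent_set G S \<longleftrightarrow> S \<subseteq> verts G \<and> (\<forall>u\<in>S. \<forall>v\<in>S. {u, v} \<notin> edges G)"

definition clique :: "graph \<Rightarrow> nat set \<Rightarrow> bool" where
  "clique G S \<longleftrightarrow> S \<subseteq> verts G \<and> (\<forall>u\<in>S. \<forall>v\<in>S. u \<noteq> v \<longrightarrow> {u, v} \<in> edges G)"

definition independence_function :: "(graph \<Rightarrow> bool) \<Rightarrow> (nat \<Rightarrow> nat) \<Rightarrow> bool" where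
  "independence_function Q f \<longleftrightarrow> (\<forall>G. wf_graph G \<and> Q G \<longrightarrow>
     (\<exists>S. independent_set G S \<and> card S = f (card (verts G))))"

definition clique_function :: "(graph \<Rightarrow> bool) \<Rightarrow> (nat \<Rightarrow> nat) \<Rightarrow> bool" where
  "clique_function Q f \<longleftrightarrow> (\<forall>G. wf_graph G \<and> Q G \<longrightarrow>
     (\<exists>S. clique G S \<and> card S = f (card (verts G))))"

definition PQ :: "(graph \<Rightarrow> bool) \<Rightarrow> graph \<Rightarrow> int poly" where
  "PQ Q G = (\<Sum>A \<in> {A. A \<subseteq> verts G \<and> Q (induced G A)}. monom 1 (card A))"

definition P_unique :: "(graph \<Rightarrow> 'b) \<Rightarrow> graph \<Rightarrow> bool" where
  "P_unique P G \<longleftrightarrow> (\<forall>H. wf_graph H \<and> P H = P G \<longrightarrow> graph_iso G H)"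

definition graphs_on :: "nat \<Rightarrow> graph set" where
  "graphs_on n = {G. wf_graph G \<and> verts G = {0..<n}}"

definition iso_classes :: "nat \<Rightarrow> graph set set" where
  "iso_classes n = graphs_on n // {(G, H). G \<in> graphs_on n \<and> H \<in> graphs_on n \<and> graph_iso G H}"

definition unique_classes :: "(graph \<Rightarrow> 'b) \<Rightarrow> nat \<Rightarrow> graph set set" where
  "unique_classes P n = {C \<in> iso_classes n. \<forall>G\<in>C. P_unique P G}"

definition weakly_distinguishing :: "(graph \<Rightarrow> 'b) \<Rightarrow> bool" where
  "weakly_distinguishing P \<longleftrightarrow>
     (\<lambda>n. real (card (unique_classes P n)) / real (card (iso_classes n))) \<longlonglongrightarrow> 0"

end

theory Submission
  imports Defs "HOL-Library.FuncSet" "HOL-Real_Asymp.Real_Asymp"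
begin

text \<open>
  Put \<open>s = n div (4 a)\<close>. If a graph \<open>G\<close> on \<open>n\<close> vertices has neither an independent set
  nor a clique with \<open>s\<close> vertices, then every \<open>A\<close> with \<open>G[A] \<in> Q\<close> has fewer than \<open>a s\<close>
  vertices, because \<open>G[A]\<close> contains such a set of size \<open>f |A| \<ge> |A| / a\<close>. So \<open>P\<^sub>Q(G)\<close> has
  degree below \<open>a s \<le> n / 4\<close> and coefficients in \<open>[0, 2^n]\<close>: there are at most
  \<open>2^((n + 1) a s)\<close> such polynomials, and distinct \<open>P\<^sub>Q\<close>-unique classes have distinct
  polynomials. The graphs that do contain a homogeneous \<open>s\<close>-set number at most
  \<open>2^(n + 1) 2^(C(n,2) - C(s,2))\<close>. Compared with the at least \<open>2^C(n,2) / n^n\<close>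
  isomorphism classes both counts are negligible, since \<open>C(s,2)\<close> and \<open>C(n,2) - (n + 1) n / 4\<close>
  grow quadratically in \<open>n\<close> while \<open>n^n = 2^(n log n)\<close>.
\<close>

section \<open>Labelled graphs and their isomorphism classes\<close>

definition all_edges :: "nat set \<Rightarrow> nat set set" where
  "all_edges V = {e. e \<subseteq> V \<and> card e = 2}"

lemma doubletons_eq_all_edges: "{{u, v} | u v. u \<in> V \<and> v \<in> V \<and> u \<noteq> v} = all_edges V"
  unfolding all_edges_def by (auto simp: card_2_iff)

lemma all_edges_mono: "A \<subseteq> V \<Longrightarrow> all_edges A \<subseteq> all_edges V"
  unfolding all_edges_def by auto

lemma finite_all_edges: "finite V \<Longrightarrow> finite (all_edges V)"
  unfolding all_edges_def by (auto intro: finite_subset[of _ "Pow V"])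

lemma card_all_edges: "finite V \<Longrightarrow> card (all_edges V) = card V choose 2"
  unfolding all_edges_def by (rule n_subsets)

lemma all_edges_elim:
  assumes "e \<in> all_edges V"
  obtains u v where "e = {u, v}" "u \<in> V" "v \<in> V" "u \<noteq> v"
  using assms by (auto simp: all_edges_def card_2_iff)

lemma graphs_on_eq: "graphs_on n = Pair {0..<n} ` Pow (all_edges {0..<n})"
proof -
  have "G \<in> graphs_on n \<longleftrightarrow> G \<in> Pair {0..<n} ` Pow (all_edges {0..<n})" for G
    by (cases G) (auto simp: graphs_on_def wf_graph_def verts_def edges_def doubletons_eq_all_edges)
  then show ?thesis by blast
qed

lemma finite_graphs_on: "finite (graphs_on n)"
  unfolding graphs_on_eq by (simp add: finite_all_edges)

lemma card_graphs_on: "card (graphs_on n) = 2 ^ (n choose 2)"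
  unfolding graphs_on_eq
  by (subst card_image) (auto simp: inj_on_def card_Pow card_all_edges finite_all_edges)

lemma graph_iso_refl: "graph_iso G G"
  unfolding graph_iso_def by (rule exI[of _ id]) auto

lemma graph_iso_sym:
  assumes "graph_iso G H"
  shows "graph_iso H G"
proof -
  obtain h where h: "bij_betw h (verts G) (verts H)"
    and e: "\<forall>u\<in>verts G. \<forall>v\<in>verts G. {u, v} \<in> edges G \<longleftrightarrow> {h u, h v} \<in> edges H"
    using assms unfolding graph_iso_def by blast
  let ?g = "inv_into (verts G) h"
  have g: "bij_betw ?g (verts H) (verts G)"
    using h by (rule bij_betw_inv_into)
  have "{u, v} \<in> edges H \<longleftrightarrow> {?g u, ?g v} \<in> edges G" if "u \<in> verts H" "v \<in> verts H" for u v
  proof -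
    have "?g u \<in> verts G" "h (?g u) = u" "?g v \<in> verts G" "h (?g v) = v"
      using that g h by (auto simp: bij_betw_def intro: f_inv_into_f)
    then show ?thesis using e by metis
  qed
  with g show ?thesis unfolding graph_iso_def by blast
qed

lemma graph_iso_trans:
  assumes "graph_iso G H" "graph_iso H K"
  shows "graph_iso G K"
proof -
  obtain h where h: "bij_betw h (verts G) (verts H)"
    and eh: "\<forall>u\<in>verts G. \<forall>v\<in>verts G. {u, v} \<in> edges G \<longleftrightarrow> {h u, h v} \<in> edges H"
    using assms(1) unfolding graph_iso_def by blast
  obtain g where g: "bij_betw g (verts H) (verts K)"
    and eg: "\<forall>u\<in>verts H. \<forall>v\<in>verts H. {u, v} \<in> edges H \<longleftrightarrow> {g u, g v} \<in> edges K"
    using assms(2) unfolding graph_iso_def by blast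
  have "{u, v} \<in> edges G \<longleftrightarrow> {(g \<circ> h) u, (g \<circ> h) v} \<in> edges K"
    if "u \<in> verts G" "v \<in> verts G" for u v
    using that eh eg bij_betwE[OF h] by simp
  with bij_betw_trans[OF h g] show ?thesis unfolding graph_iso_def by blast
qed

definition iso_rel :: "nat \<Rightarrow> (graph \<times> graph) set" where
  "iso_rel n = {(G, H). G \<in> graphs_on n \<and> H \<in> graphs_on n \<and> graph_iso G H}"

lemma equiv_iso_rel: "equiv (graphs_on n) (iso_rel n)"
  unfolding equiv_def refl_on_def sym_def trans_def iso_rel_def
  by (auto intro: graph_iso_refl graph_iso_sym graph_iso_trans)

lemma iso_classes_eq_quotient: "iso_classes n = graphs_on n // iso_rel n"
  unfolding iso_classes_def iso_rel_def by simp

lemma iso_class_subset: "C \<in> iso_classes n \<Longrightarrow> C \<subseteq> graphs_on n"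
  by (auto simp: iso_classes_eq_quotient quotient_def iso_rel_def)

lemma iso_classes_eqI:
  assumes "C \<in> iso_classes n" "C' \<in> iso_classes n" "G \<in> C" "G \<in> C'"
  shows "C = C'"
  using quotient_disj[OF equiv_iso_rel, of C n C'] assms
  by (auto simp: iso_classes_eq_quotient)

lemma iso_class_closed:
  assumes "C \<in> iso_classes n" "G \<in> C" "H \<in> graphs_on n" "graph_iso G H"
  shows "H \<in> C"
proof -
  have "(G, H) \<in> iso_rel n"
    using assms iso_class_subset by (auto simp: iso_rel_def)
  with assms(1,2) show ?thesis
    by (simp add: iso_classes_eq_quotient in_quotient_imp_closed[OF equiv_iso_rel])
qed

lemma iso_class_subset_relabellings:
  assumes G: "G \<in> graphs_on n"
  shows "iso_rel n `` {G} \<subseteq> (\<lambda>h. ({0..<n}, (`) h ` edges G)) ` ({0..<n} \<rightarrow>\<^sub>E {0..<n})"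
proof
  fix H assume "H \<in> iso_rel n `` {G}"
  then have H: "H \<in> graphs_on n" and "graph_iso G H" by (auto simp: iso_rel_def)
  then obtain h where h: "bij_betw h {0..<n} {0..<n}"
    and e: "\<forall>u\<in>{0..<n}. \<forall>v\<in>{0..<n}. {u, v} \<in> edges G \<longleftrightarrow> {h u, h v} \<in> edges H"
    using G unfolding graph_iso_def graphs_on_def by auto
  let ?h = "restrict h {0..<n}"
  have EG: "edges G \<subseteq> all_edges {0..<n}" and EH: "edges H \<subseteq> all_edges {0..<n}"
    using G H by (auto simp: graphs_on_def wf_graph_def doubletons_eq_all_edges)
  have "edges H \<subseteq> (`) ?h ` edges G"
  proof
    fix e' assume e': "e' \<in> edges H"
    with EH obtain x y where xy: "e' = {x, y}" "x \<in> {0..<n}" "y \<in> {0..<n}"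
      by (meson all_edges_elim subsetD)
    then have "x \<in> h ` {0..<n}" "y \<in> h ` {0..<n}"
      using h by (simp_all add: bij_betw_def)
    then obtain u v where "u \<in> {0..<n}" "x = h u" "v \<in> {0..<n}" "y = h v"
      by blast
    with e e' xy show "e' \<in> (`) ?h ` edges G"
      by (intro image_eqI[of _ _ "{u, v}"]) auto
  qed
  moreover have "(`) ?h ` edges G \<subseteq> edges H"
  proof
    fix e' assume "e' \<in> (`) ?h ` edges G"
    then obtain e where "e \<in> edges G" "e' = ?h ` e" by blast
    moreover from this(1) EG obtain u v where "e = {u, v}" "u \<in> {0..<n}" "v \<in> {0..<n}"
      by (meson all_edges_elim subsetD)
    ultimately show "e' \<in> edges H" using e by auto
  qed
  moreover have "verts H = {0..<n}" using H by (simp add: graphs_on_def)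
  ultimately have "H = ({0..<n}, (`) ?h ` edges G)"
    by (cases H) (simp add: verts_def edges_def)
  moreover have "?h \<in> {0..<n} \<rightarrow>\<^sub>E {0..<n}" using h by (auto simp: bij_betw_def)
  ultimately show "H \<in> (\<lambda>h. ({0..<n}, (`) h ` edges G)) ` ({0..<n} \<rightarrow>\<^sub>E {0..<n})"
    by blast
qed

lemma card_iso_class_le:
  assumes "G \<in> graphs_on n"
  shows "card (iso_rel n `` {G}) \<le> n ^ n"
proof -
  have "card (iso_rel n `` {G}) \<le> card ((\<lambda>h. ({0..<n}, (`) h ` edges G)) ` ({0..<n} \<rightarrow>\<^sub>E {0..<n}))"
    by (rule card_mono[OF _ iso_class_subset_relabellings[OF assms]]) (auto intro: finite_PiE)
  also have "\<dots> \<le> card ({0..<n} \<rightarrow>\<^sub>E {0..<n::nat})"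
    by (rule card_image_le) (simp add: finite_PiE)
  also have "\<dots> = n ^ n" by (simp add: card_PiE)
  finally show ?thesis .
qed

lemma card_iso_classes_lower: "2 ^ (n choose 2) \<le> card (iso_classes n) * n ^ n"
proof -
  have "2 ^ (n choose 2) = card (\<Union>(iso_classes n))"
    using Union_quotient[OF equiv_iso_rel] by (simp add: iso_classes_eq_quotient card_graphs_on)
  also have "\<dots> \<le> (\<Sum>C\<in>iso_classes n. card C)"
    by (rule card_Union_le_sum_card)
  also have "\<dots> \<le> (\<Sum>C\<in>iso_classes n. n ^ n)"
    by (rule sum_mono) (auto simp: iso_classes_eq_quotient quotient_def intro: card_iso_class_le)
  finally show ?thesis by simp
qed

section \<open>Homogeneous sets\<close>

definition has_homogeneous_set :: "graph \<Rightarrow> nat \<Rightarrow> bool" where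
  "has_homogeneous_set G s \<longleftrightarrow> (\<exists>S. card S = s \<and> (independent_set G S \<or> clique G S))"

lemma independent_set_subset: "independent_set G S \<Longrightarrow> T \<subseteq> S \<Longrightarrow> independent_set G T"
  unfolding independent_set_def by blast

lemma clique_subset: "clique G S \<Longrightarrow> T \<subseteq> S \<Longrightarrow> clique G T"
  unfolding clique_def by blast

lemma independent_set_induced:
  "independent_set (induced G A) S \<Longrightarrow> A \<subseteq> verts G \<Longrightarrow> independent_set G S"
  unfolding independent_set_def induced_def verts_def edges_def by fastforce

lemma clique_induced: "clique (induced G A) S \<Longrightarrow> A \<subseteq> verts G \<Longrightarrow> clique G S"
  unfolding clique_def induced_def verts_def edges_def by fastforce

lemma wf_graph_induced: "wf_graph G \<Longrightarrow> A \<subseteq> verts G \<Longrightarrow> wf_graph (induced G A)"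
  unfolding wf_graph_def induced_def verts_def edges_def doubletons_eq_all_edges all_edges_def
  by (auto intro: finite_subset)

lemma has_homogeneous_setI:
  assumes "independent_set G S \<or> clique G S" "s \<le> card S"
  shows "has_homogeneous_set G s"
proof -
  obtain T where "T \<subseteq> S" "card T = s"
    using assms(2) by (rule obtain_subset_with_card_n)
  moreover from this(1) assms(1) have "independent_set G T \<or> clique G T"
    by (meson independent_set_subset clique_subset)
  ultimately show ?thesis
    unfolding has_homogeneous_set_def by blast
qed

lemma card_less_if_no_homogeneous_set:
  assumes f: "independence_function Q f \<or> clique_function Q f"
    and a: "a \<ge> 1" and f_ge: "\<forall>m. real (f m) \<ge> real m / real a"
    and G: "wf_graph G" "\<not> has_homogeneous_set G s"
    and A: "A \<subseteq> verts G" "Q (induced G A)"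
  shows "card A < a * s"
proof (rule ccontr)
  assume "\<not> card A < a * s"
  then have "real s \<le> real (card A) / real a"
    using a by (simp add: field_simps flip: of_nat_mult)
  also have "\<dots> \<le> real (f (card A))" using f_ge by blast
  finally have s_le: "s \<le> f (card A)" by simp
  have verts_induced: "verts (induced G A) = A" by (simp add: induced_def verts_def)
  from f obtain S where "independent_set (induced G A) S \<or> clique (induced G A) S"
    and card_S: "card S = f (card A)"
    using wf_graph_induced[OF G(1) A(1)] A(2) verts_induced
    unfolding independence_function_def clique_function_def by metis
  with A(1) have "independent_set G S \<or> clique G S"
    by (meson independent_set_induced clique_induced)
  then have "has_homogeneous_set G s"
    by (rule has_homogeneous_setI) (simp add: s_le card_S)
  with G(2) show False ..
qed

lemma independent_graphs_on_subset:
  assumes "A \<subseteq> {0..<n}"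
  shows "{G \<in> graphs_on n. independent_set G A}
    \<subseteq> Pair {0..<n} ` Pow (all_edges {0..<n} - all_edges A)"
proof
  fix G assume G: "G \<in> {G \<in> graphs_on n. independent_set G A}"
  then obtain E where GE: "G = ({0..<n}, E)" "E \<subseteq> all_edges {0..<n}"
    unfolding graphs_on_eq by blast
  have "E \<inter> all_edges A = {}"
    using G GE by (auto simp: independent_set_def edges_def elim!: all_edges_elim)
  with GE show "G \<in> Pair {0..<n} ` Pow (all_edges {0..<n} - all_edges A)" by blast
qed

lemma clique_graphs_on_subset:
  assumes "A \<subseteq> {0..<n}"
  shows "{G \<in> graphs_on n. clique G A}
    \<subseteq> (\<lambda>F. ({0..<n}, F \<union> all_edges A)) ` Pow (all_edges {0..<n} - all_edges A)"
proof
  fix G assume G: "G \<in> {G \<in> graphs_on n. clique G A}"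
  then obtain E where GE: "G = ({0..<n}, E)" "E \<subseteq> all_edges {0..<n}"
    unfolding graphs_on_eq by blast
  have "all_edges A \<subseteq> E"
    using G GE by (auto simp: clique_def edges_def elim!: all_edges_elim)
  then have "E = (E - all_edges A) \<union> all_edges A" by blast
  with GE show "G \<in> (\<lambda>F. ({0..<n}, F \<union> all_edges A)) ` Pow (all_edges {0..<n} - all_edges A)"
    by blast
qed

lemma card_Pow_all_edges_diff:
  assumes "A \<subseteq> {0..<n}"
  shows "card (Pow (all_edges {0..<n} - all_edges A)) = 2 ^ ((n choose 2) - (card A choose 2))"
proof -
  have "finite A" using assms finite_subset by blast
  then have "card (all_edges {0..<n} - all_edges A) = (n choose 2) - (card A choose 2)"
    using assms by (simp add: card_Diff_subset finite_all_edges all_edges_mono card_all_edges)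
  then show ?thesis by (simp add: card_Pow finite_all_edges)
qed

lemma card_graphs_on_homogeneous:
  "card {G \<in> graphs_on n. has_homogeneous_set G s}
     \<le> (n choose s) * (2 * 2 ^ ((n choose 2) - (s choose 2)))"
proof -
  let ?bound = "2 ^ ((n choose 2) - (s choose 2)) :: nat"
  let ?S = "{A. A \<subseteq> {0..<n} \<and> card A = s}"
  let ?I = "\<lambda>A. {G \<in> graphs_on n. independent_set G A}"
  let ?K = "\<lambda>A. {G \<in> graphs_on n. clique G A}"
  have "{G \<in> graphs_on n. has_homogeneous_set G s} \<subseteq> (\<Union>A\<in>?S. ?I A \<union> ?K A)"
    by (auto simp: has_homogeneous_set_def graphs_on_def independent_set_def clique_def)
  moreover have "finite (\<Union>A\<in>?S. ?I A \<union> ?K A)"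
    by (rule finite_subset[OF _ finite_graphs_on[of n]]) blast
  ultimately have "card {G \<in> graphs_on n. has_homogeneous_set G s} \<le> card (\<Union>A\<in>?S. ?I A \<union> ?K A)"
    by (rule card_mono[rotated])
  also have "\<dots> \<le> (\<Sum>A\<in>?S. card (?I A) + card (?K A))"
    by (intro card_UN_le[THEN order_trans] sum_mono card_Un_le) (simp add: finite_subset)
  also have "\<dots> \<le> (\<Sum>A\<in>?S. 2 * ?bound)"
  proof (rule sum_mono)
    fix A assume A: "A \<in> ?S"
    let ?F = "Pow (all_edges {0..<n} - all_edges A)"
    have F: "finite ?F" "card ?F = ?bound"
      using A card_Pow_all_edges_diff[of A n] by (simp_all add: finite_all_edges)
    have "card (?I A) \<le> card (Pair {0..<n} ` ?F)"
      using A F(1) by (intro card_mono independent_graphs_on_subset) auto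
    also have "\<dots> \<le> ?bound"
      using card_image_le[OF F(1)] F(2) by simp
    finally have "card (?I A) \<le> ?bound" .
    moreover have "card (?K A) \<le> card ((\<lambda>F. ({0..<n}, F \<union> all_edges A)) ` ?F)"
      using A F(1) by (intro card_mono clique_graphs_on_subset) auto
    moreover have "\<dots> \<le> ?bound"
      using card_image_le[OF F(1)] F(2) by simp
    ultimately show "card (?I A) + card (?K A) \<le> 2 * ?bound" by linarith
  qed
  also have "\<dots> = (n choose s) * (2 * ?bound)"
    by (simp add: n_subsets)
  finally show ?thesis .
qed

section \<open>The subgraph polynomial\<close>

lemma coeff_PQ:
  assumes "finite (verts G)"
  shows "coeff (PQ Q G) k = int (card {A. A \<subseteq> verts G \<and> Q (induced G A) \<and> card A = k})"
proof -
  let ?S = "{A. A \<subseteq> verts G \<and> Q (induced G A)}"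
  have "finite ?S"
    using assms by (auto intro: finite_subset[of _ "Pow (verts G)"])
  then have "coeff (PQ Q G) k = int (card {A \<in> ?S. card A = k})"
    unfolding PQ_def by (simp add: coeff_sum coeff_monom sum.If_cases Int_def)
  also have "{A \<in> ?S. card A = k} = {A. A \<subseteq> verts G \<and> Q (induced G A) \<and> card A = k}"
    by blast
  finally show ?thesis .
qed

definition bounded_polys :: "nat \<Rightarrow> nat \<Rightarrow> int poly set" where
  "bounded_polys c m = {p. (\<forall>k. coeff p k \<in> {0..int c}) \<and> (\<forall>k\<ge>m. coeff p k = 0)}"

lemma finite_card_bounded_polys:
  "finite (bounded_polys c m) \<and> card (bounded_polys c m) \<le> (c + 1) ^ m"
proof -
  let ?coeffs = "\<lambda>p. restrict (coeff p) {0..<m}"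
  let ?B = "{0..<m} \<rightarrow>\<^sub>E {0..int c}"
  have inj: "inj_on ?coeffs (bounded_polys c m)"
  proof (rule inj_onI)
    fix p q assume pq: "p \<in> bounded_polys c m" "q \<in> bounded_polys c m"
      and eq: "?coeffs p = ?coeffs q"
    show "p = q"
    proof (rule poly_eqI)
      fix k show "coeff p k = coeff q k"
        using pq fun_cong[OF eq, of k] by (cases "k < m") (simp_all add: bounded_polys_def)
    qed
  qed
  have sub: "?coeffs ` bounded_polys c m \<subseteq> ?B" by (auto simp: bounded_polys_def)
  have fin: "finite ?B" by (simp add: finite_PiE)
  have "card ?B = (c + 1) ^ m" by (simp add: card_PiE nat_add_distrib)
  then show ?thesis
    using card_inj_on_le[OF inj sub fin] inj_on_finite[OF inj sub fin] by simp
qed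

lemma PQ_in_bounded_polys:
  assumes fin: "finite (verts G)"
    and small: "\<And>A. A \<subseteq> verts G \<Longrightarrow> Q (induced G A) \<Longrightarrow> card A < m"
  shows "PQ Q G \<in> bounded_polys (2 ^ card (verts G)) m"
proof -
  let ?count = "\<lambda>k. card {A. A \<subseteq> verts G \<and> Q (induced G A) \<and> card A = k}"
  have "?count k \<le> card (Pow (verts G))" for k
    using fin by (intro card_mono) auto
  then have "coeff (PQ Q G) k \<in> {0..int (2 ^ card (verts G))}" for k
    using fin by (simp add: coeff_PQ card_Pow)
  moreover have "coeff (PQ Q G) k = 0" if "k \<ge> m" for k
  proof -
    have "{A. A \<subseteq> verts G \<and> Q (induced G A) \<and> card A = k} = {}"
      using small that by (auto simp: not_less[symmetric])
    then show ?thesis using fin by (simp add: coeff_PQ)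
  qed
  ultimately show ?thesis by (simp add: bounded_polys_def)
qed

section \<open>Counting unique classes\<close>

definition class_rep :: "graph set \<Rightarrow> graph" where
  "class_rep C = (SOME G. G \<in> C)"

lemma class_rep_in: "C \<in> iso_classes n \<Longrightarrow> class_rep C \<in> C"
  using in_quotient_imp_non_empty[OF equiv_iso_rel]
  by (simp add: class_rep_def iso_classes_eq_quotient some_in_eq)

lemma class_rep_in_graphs_on: "C \<in> iso_classes n \<Longrightarrow> class_rep C \<in> graphs_on n"
  using class_rep_in iso_class_subset by blast

lemma inj_on_class_rep: "inj_on class_rep (iso_classes n)"
proof (rule inj_onI)
  fix C C' assume C: "C \<in> iso_classes n" and C': "C' \<in> iso_classes n"
    and "class_rep C = class_rep C'"
  then have "class_rep C \<in> C'" using class_rep_in[OF C'] by simp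
  then show "C = C'" by (rule iso_classes_eqI[OF C C' class_rep_in[OF C]])
qed

text \<open>\<open>P\<close> need not be constant on isomorphism classes; \<open>P\<close>-uniqueness of the
  representatives is enough.\<close>

lemma inj_on_P_class_rep: "inj_on (P \<circ> class_rep) (unique_classes P n)"
proof (rule inj_onI)
  fix C C' assume C: "C \<in> unique_classes P n" and C': "C' \<in> unique_classes P n"
    and eq: "(P \<circ> class_rep) C = (P \<circ> class_rep) C'"
  have classes: "C \<in> iso_classes n" "C' \<in> iso_classes n"
    using C C' by (simp_all add: unique_classes_def)
  have "P_unique P (class_rep C)"
    using C class_rep_in[OF classes(1)] by (simp add: unique_classes_def)
  moreover have "wf_graph (class_rep C')" "P (class_rep C') = P (class_rep C)"
    using class_rep_in_graphs_on[OF classes(2)] eq by (simp_all add: graphs_on_def)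
  ultimately have "graph_iso (class_rep C) (class_rep C')"
    unfolding P_unique_def by blast
  then have "class_rep C' \<in> C"
    by (rule iso_class_closed[OF classes(1) class_rep_in[OF classes(1)]
          class_rep_in_graphs_on[OF classes(2)]])
  then show "C = C'"
    by (rule iso_classes_eqI[OF classes(2,1) class_rep_in[OF classes(2)], symmetric])
qed

lemma card_unique_classes_le:
  "card (unique_classes P n)
     \<le> card {G \<in> graphs_on n. B G} + card (P ` {G \<in> graphs_on n. \<not> B G})"
proof -
  let ?U = "unique_classes P n"
  let ?bad = "{C \<in> ?U. B (class_rep C)}" and ?good = "{C \<in> ?U. \<not> B (class_rep C)}"
  have U: "?U \<subseteq> iso_classes n" by (auto simp: unique_classes_def)
  have "card ?bad \<le> card {G \<in> graphs_on n. B G}"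
  proof (rule card_inj_on_le)
    show "inj_on class_rep ?bad"
      by (rule inj_on_subset[OF inj_on_class_rep]) (use U in blast)
    show "class_rep ` ?bad \<subseteq> {G \<in> graphs_on n. B G}"
      using U class_rep_in_graphs_on by blast
  qed (simp add: finite_graphs_on)
  moreover have "card ?good \<le> card (P ` {G \<in> graphs_on n. \<not> B G})"
  proof (rule card_inj_on_le)
    show "inj_on (P \<circ> class_rep) ?good"
      by (rule inj_on_subset[OF inj_on_P_class_rep]) blast
    show "(P \<circ> class_rep) ` ?good \<subseteq> P ` {G \<in> graphs_on n. \<not> B G}"
      unfolding image_comp[symmetric] using U class_rep_in_graphs_on by (intro image_mono) blast
  qed (simp add: finite_graphs_on)
  moreover have "card ?U = card (?bad \<union> ?good)"
    by (rule arg_cong[where f = card]) blast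
  then have "card ?U \<le> card ?bad + card ?good"
    using card_Un_le by (rule ord_eq_le_trans)
  ultimately show ?thesis by linarith
qed

lemma card_unique_classes_PQ_le:
  assumes "independence_function Q f \<or> clique_function Q f"
    and "a \<ge> 1" and "\<forall>m. real (f m) \<ge> real m / real a"
  shows "card (unique_classes (PQ Q) n)
    \<le> 2 ^ (n + 1) * 2 ^ ((n choose 2) - (s choose 2)) + 2 ^ ((n + 1) * (a * s))"
proof -
  let ?good = "{G \<in> graphs_on n. \<not> has_homogeneous_set G s}"
  have "card {G \<in> graphs_on n. has_homogeneous_set G s}
      \<le> (n choose s) * (2 * 2 ^ ((n choose 2) - (s choose 2)))"
    by (rule card_graphs_on_homogeneous)
  also have "\<dots> \<le> 2 ^ (n + 1) * 2 ^ ((n choose 2) - (s choose 2))"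
    using binomial_le_pow2[of n s] by simp
  finally have bad: "card {G \<in> graphs_on n. has_homogeneous_set G s}
      \<le> 2 ^ (n + 1) * 2 ^ ((n choose 2) - (s choose 2))" .
  have "PQ Q ` ?good \<subseteq> bounded_polys (2 ^ n) (a * s)"
  proof
    fix p assume "p \<in> PQ Q ` ?good"
    then obtain G where G: "G \<in> graphs_on n" "\<not> has_homogeneous_set G s" and p: "p = PQ Q G"
      by blast
    then have "wf_graph G" "verts G = {0..<n}" by (simp_all add: graphs_on_def)
    with G show "p \<in> bounded_polys (2 ^ n) (a * s)"
      unfolding p using PQ_in_bounded_polys card_less_if_no_homogeneous_set[OF assms]
      by (metis card_atLeastLessThan diff_zero finite_atLeastLessThan)
  qed
  then have "card (PQ Q ` ?good) \<le> (2 ^ n + 1) ^ (a * s)"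
    using finite_card_bounded_polys[of "2 ^ n" "a * s"] by (meson card_mono order_trans)
  also have "\<dots> \<le> (2 ^ (n + 1)) ^ (a * s)"
    by (intro power_mono) simp_all
  also have "\<dots> = 2 ^ ((n + 1) * (a * s))"
    by (rule power_mult[symmetric])
  finally have good: "card (PQ Q ` ?good) \<le> 2 ^ ((n + 1) * (a * s))" .
  show ?thesis
    using card_unique_classes_le[of "PQ Q" n "\<lambda>G. has_homogeneous_set G s"] bad good
    by linarith
qed

lemma unique_classes_ratio_le:
  assumes "independence_function Q f \<or> clique_function Q f"
    and "a \<ge> 1" and "\<forall>m. real (f m) \<ge> real m / real a" and "s \<le> n"
  shows "real (card (unique_classes (PQ Q) n)) / real (card (iso_classes n))
    \<le> real n ^ n * 2 ^ (n + 1) / 2 ^ (s choose 2)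
      + real n ^ n * 2 ^ ((n + 1) * (a * s)) / 2 ^ (n choose 2)"
proof -
  let ?N = "n choose 2" and ?\<sigma> = "s choose 2"
  let ?u = "real (card (unique_classes (PQ Q) n))" and ?i = "real (card (iso_classes n))"
  have n_pow: "0 < real n ^ n" by (cases n) simp_all
  have "real (2 ^ ?N) \<le> real (card (iso_classes n) * n ^ n)"
    using card_iso_classes_lower of_nat_le_iff by blast
  then have iso_lower: "2 ^ ?N \<le> ?i * real n ^ n" by simp
  have i_pos: "0 < ?i * real n ^ n"
    by (rule less_le_trans[OF _ iso_lower]) simp
  have "?u / ?i = real n ^ n * ?u / (?i * real n ^ n)"
    using n_pow by simp
  also have "\<dots> \<le> real n ^ n * ?u / 2 ^ ?N"
    using iso_lower n_pow i_pos by (intro divide_left_mono) simp_all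
  also have "\<dots> \<le> real n ^ n * (2 ^ (n + 1) * 2 ^ (?N - ?\<sigma>) + 2 ^ ((n + 1) * (a * s))) / 2 ^ ?N"
  proof -
    have "?u \<le> real (2 ^ (n + 1) * 2 ^ (?N - ?\<sigma>) + 2 ^ ((n + 1) * (a * s)))"
      using card_unique_classes_PQ_le[OF assms(1-3), of n s] by (simp only: of_nat_le_iff)
    then show ?thesis
      using n_pow by (intro divide_right_mono mult_left_mono) simp_all
  qed
  also have "2 ^ (?N - ?\<sigma>) = (2::real) ^ ?N / 2 ^ ?\<sigma>"
    using binomial_right_mono[OF assms(4)] by (simp add: power_diff)
  finally show ?thesis by (simp add: field_simps)
qed

section \<open>Asymptotics\<close>

lemma real_choose_two: "real (m choose 2) = real m * (real m - 1) / 2"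
  by (induction m) (auto simp: numeral_2_eq_2 field_simps)

lemma two_power_eq_powr: "(2::real) ^ k = 2 powr real k"
  by (simp add: powr_realpow)

lemma tendsto_homogeneous_bound:
  assumes "k > 0"
  shows "(\<lambda>n. real n ^ n * 2 ^ (n + 1) / 2 ^ (n div k choose 2)) \<longlonglongrightarrow> 0"
proof (rule tendsto_sandwich[OF _ _ tendsto_const])
  define c where "c = 1 / real k"
  have c: "c > 0" using assms by (simp add: c_def)
  let ?g = "\<lambda>n. real n ^ n * 2 ^ (n + 1) / 2 powr ((c * real n - 1) * (c * real n - 2) / 2)"
  show "?g \<longlonglongrightarrow> 0" using c by real_asymp
  show "\<forall>\<^sub>F n in sequentially. 0 \<le> real n ^ n * 2 ^ (n + 1) / 2 ^ (n div k choose 2)"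
    by simp
  show "\<forall>\<^sub>F n in sequentially. real n ^ n * 2 ^ (n + 1) / 2 ^ (n div k choose 2) \<le> ?g n"
  proof (rule eventually_mono[OF eventually_ge_at_top[of "nat \<lceil>2 / c\<rceil>"]])
    fix n assume "nat \<lceil>2 / c\<rceil> \<le> n"
    then have "2 \<le> c * real n" using c by (simp add: field_simps)
    moreover have "c * real n \<le> real (n div k) + 1"
    proof -
      have "n < k * (n div k + 1)" using dividend_less_times_div[OF assms, of n] by simp
      then have "real n \<le> real k * (real (n div k) + 1)"
        by (metis less_imp_le of_nat_1 of_nat_add of_nat_le_iff of_nat_mult)
      then show ?thesis using assms by (simp add: c_def field_simps)
    qed
    ultimately have "(c * real n - 1) * (c * real n - 2) \<le> real (n div k) * (real (n div k) - 1)"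
      by (intro mult_mono) auto
    then have "2 powr ((c * real n - 1) * (c * real n - 2) / 2) \<le> 2 ^ (n div k choose 2)"
      by (simp add: two_power_eq_powr real_choose_two)
    then show "real n ^ n * 2 ^ (n + 1) / 2 ^ (n div k choose 2) \<le> ?g n"
      by (intro divide_left_mono) simp_all
  qed
qed

lemma tendsto_polynomial_bound:
  fixes m :: "nat \<Rightarrow> nat"
  assumes m: "\<And>n. 4 * m n \<le> n"
  shows "(\<lambda>n. real n ^ n * 2 ^ ((n + 1) * m n) / 2 ^ (n choose 2)) \<longlonglongrightarrow> 0"
proof (rule tendsto_sandwich[OF _ _ tendsto_const])
  let ?g = "\<lambda>n. real n ^ n * 2 powr ((real n + 1) * (real n / 4)) / 2 powr (real n * (real n - 1) / 2)"
  show "?g \<longlonglongrightarrow> 0" by real_asymp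
  show "\<forall>\<^sub>F n in sequentially. 0 \<le> real n ^ n * 2 ^ ((n + 1) * m n) / 2 ^ (n choose 2)"
    by simp
  show "\<forall>\<^sub>F n in sequentially. real n ^ n * 2 ^ ((n + 1) * m n) / 2 ^ (n choose 2) \<le> ?g n"
  proof (rule always_eventually, rule allI)
    fix n
    have "real (4 * m n) \<le> real n"
      using m of_nat_le_iff by blast
    then have "(real n + 1) * real (m n) \<le> (real n + 1) * (real n / 4)"
      by (intro mult_left_mono) simp_all
    then have "real ((n + 1) * m n) \<le> (real n + 1) * (real n / 4)"
      by (simp only: of_nat_mult of_nat_add of_nat_1)
    then have numerator: "(2::real) ^ ((n + 1) * m n) \<le> 2 powr ((real n + 1) * (real n / 4))"
      by (simp add: two_power_eq_powr)
    have denominator: "(2::real) ^ (n choose 2) = 2 powr (real n * (real n - 1) / 2)"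
      by (simp add: two_power_eq_powr real_choose_two)
    show "real n ^ n * 2 ^ ((n + 1) * m n) / 2 ^ (n choose 2) \<le> ?g n"
      unfolding denominator by (intro divide_right_mono mult_left_mono numerator) simp_all
  qed
qed

theorem theorem3:
  fixes Q :: "graph \<Rightarrow> bool" and f :: "nat \<Rightarrow> nat" and a :: nat
  assumes "graph_property Q"
    and "independence_function Q f \<or> clique_function Q f"
    and "a \<ge> 1"
    and "\<forall>n. real (f n) \<ge> real n / real a"
  shows "weakly_distinguishing (PQ Q)"
proof -
  define s where "s n = n div (4 * a)" for n
  have "(\<lambda>n. real n ^ n * 2 ^ (n + 1) / 2 ^ (s n choose 2)) \<longlonglongrightarrow> 0"
    unfolding s_def using assms(3) by (intro tendsto_homogeneous_bound) simp
  moreover have "(\<lambda>n. real n ^ n * 2 ^ ((n + 1) * (a * s n)) / 2 ^ (n choose 2)) \<longlonglongrightarrow> 0"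
    by (rule tendsto_polynomial_bound) (simp add: s_def mult.assoc[symmetric])
  ultimately have bound_tendsto: "(\<lambda>n. real n ^ n * 2 ^ (n + 1) / 2 ^ (s n choose 2)
      + real n ^ n * 2 ^ ((n + 1) * (a * s n)) / 2 ^ (n choose 2)) \<longlonglongrightarrow> 0"
    by (rule tendsto_add_zero)
  have ratio_le: "real (card (unique_classes (PQ Q) n)) / real (card (iso_classes n))
      \<le> real n ^ n * 2 ^ (n + 1) / 2 ^ (s n choose 2)
        + real n ^ n * 2 ^ ((n + 1) * (a * s n)) / 2 ^ (n choose 2)" for n
    unfolding s_def by (rule unique_classes_ratio_le[OF assms(2-4)]) simp
  show ?thesis
    unfolding weakly_distinguishing_def
    by (rule tendsto_sandwich[OF _ _ tendsto_const bound_tendsto])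
      (simp, intro always_eventually allI ratio_le)
qed

end
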